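(* Let $k\ge1$, let $f:[-k,k]^2\to[n]^2$ be injective and $W\subset[-k,k]^2$. Let $w(f_{|W})$ be the total number of edges (constraints, counted with multiplicity) of the constraint graph $G(f_{|W})$, and let $u(f_{|W})$ be the number of these edges containing a vertex of $G(f_{|W})$ that appears in only one constraint (i.e. has degree $1$ in $G(f_{|W})$). Then $$\gamma(f_{|W})\ge u(f_{|W})+\tfrac12\big(w(f_{|W})-u(f_{|W})\big)=\tfrac12 w(f_{|W})+\tfrac12 u(f_{|W}).$$
   Context: Every vertex $x\in[n]^2$ has four incident edges $\uparrow(x),\downarrow(x),\rightarrow(x),\leftarrow(x)$, where $\rightarrow(i,j)=\leftarrow(i+1,j)$ is the edge between $(i,j)$ and $(i+1,j)$ and $\uparrow(i,j)=\downarrow(i,j+1)$ is the edge between $(i,j)$ and $(i,j+1)$; for boundary vertices the edges leading out of $[n]^2$ are included. The constraint graph $G(f_{|W})=(V,E)$ is the multigraph whose vertices are grid edges and whose edge multiset $E$ consists of the pair $(\rightarrow(f(u)),\leftarrow(f(u+(1,0))))$ for each $u$ with $u,u+(1,0)\in W$ and $f(u+(1,0))\neq f(u)+(1,0)$, and the pair $(\uparrow(f(u)),\downarrow(f(u+(0,1))))$ for each $u$ with $u,u+(0,1)\in W$ and $f(u+(0,1))\ne f(u)+(0,1)$; $V$ is the set of grid edges appearing in some pair of $E$. With $c(f_{|W})$ the number of connected components of $G(f_{|W})$, $\gamma(f_{|W})=|V|-c(f_{|W})$. *)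

theory Defs
  imports Complex_Main "HOL-Library.Multiset"
begin

type_synonym pt = "int \<times> int"

text \<open>Grid edges of the square grid Z^2: Hor i j is the edge between (i,j) and (i+1,j);
Ver i j is the edge between (i,j) and (i,j+1). Boundary edges leading out of [n]^2 are
thus included automatically.\<close>
datatype gedge = Hor int int | Ver int int

fun eR :: "pt \<Rightarrow> gedge" where "eR (i, j) = Hor i j"
fun eL :: "pt \<Rightarrow> gedge" where "eL (i, j) = Hor (i - 1) j"
fun eU :: "pt \<Rightarrow> gedge" where "eU (i, j) = Ver i j"
fun eD :: "pt \<Rightarrow> gedge" where "eD (i, j) = Ver i (j - 1)"

definition grid :: "nat \<Rightarrow> pt set" where
  "grid n = {1..int n} \<times> {1..int n}"

definition box :: "nat \<Rightarrow> pt set" where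
  "box k = {-int k..int k} \<times> {-int k..int k}"

definition e1 :: pt where "e1 = (1, 0)"
definition e2 :: pt where "e2 = (0, 1)"

fun padd :: "pt \<Rightarrow> pt \<Rightarrow> pt" where "padd (a, b) (c, d) = (a + c, b + d)"

text \<open>Constraint indices: (u, False) is the horizontal constraint at u, (u, True) the
vertical one. The edge multiset E of G(f|W) is the image of this index set under cends.\<close>
definition constr_idx :: "(pt \<Rightarrow> pt) \<Rightarrow> pt set \<Rightarrow> (pt \<times> bool) set" where
  "constr_idx f W =
     {(u, False) | u. u \<in> W \<and> padd u e1 \<in> W \<and> f (padd u e1) \<noteq> padd (f u) e1}
   \<union> {(u, True) | u. u \<in> W \<and> padd u e2 \<in> W \<and> f (padd u e2) \<noteq> padd (f u) e2}"

fun cends :: "(pt \<Rightarrow> pt) \<Rightarrow> pt \<times> bool \<Rightarrow> gedge \<times> gedge" where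
  "cends f (u, False) = (eR (f u), eL (f (padd u e1)))"
| "cends f (u, True) = (eU (f u), eD (f (padd u e2)))"

definition cedges :: "(pt \<Rightarrow> pt) \<Rightarrow> pt set \<Rightarrow> (gedge \<times> gedge) multiset" where
  "cedges f W = image_mset (cends f) (mset_set (constr_idx f W))"

definition cverts :: "(pt \<Rightarrow> pt) \<Rightarrow> pt set \<Rightarrow> gedge set" where
  "cverts f W = (\<Union>p \<in> set_mset (cedges f W). {fst p, snd p})"

definition cconn :: "(pt \<Rightarrow> pt) \<Rightarrow> pt set \<Rightarrow> gedge rel" where
  "cconn f W = (let A = set_mset (cedges f W) in (A \<union> A\<inverse>)\<^sup>*)"

definition ncomp :: "(pt \<Rightarrow> pt) \<Rightarrow> pt set \<Rightarrow> nat" where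
  "ncomp f W = card (cverts f W // (cconn f W \<inter> (cverts f W \<times> cverts f W)))"

definition gamma :: "(pt \<Rightarrow> pt) \<Rightarrow> pt set \<Rightarrow> int" where
  "gamma f W = int (card (cverts f W)) - int (ncomp f W)"

definition wcount :: "(pt \<Rightarrow> pt) \<Rightarrow> pt set \<Rightarrow> nat" where
  "wcount f W = size (cedges f W)"

definition cdeg :: "(pt \<Rightarrow> pt) \<Rightarrow> pt set \<Rightarrow> gedge \<Rightarrow> nat" where
  "cdeg f W v = size (filter_mset (\<lambda>p. v = fst p \<or> v = snd p) (cedges f W))"

definition ucount :: "(pt \<Rightarrow> pt) \<Rightarrow> pt set \<Rightarrow> nat" where
  "ucount f W = size (filter_mset (\<lambda>p. cdeg f W (fst p) = 1 \<or> cdeg f W (snd p) = 1) (cedges f W))"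

end

theory Submission
  imports Defs
begin

text \<open>
  A constraint at \<open>u\<close> is only present when \<open>f(u + e\<^sub>i) \<noteq> f(u) + e\<^sub>i\<close>, so it is never a loop, and
  injectivity of \<open>f\<close> makes each grid edge the first endpoint of at most one constraint and the
  second endpoint of at most one. Hence \<open>G(f|W)\<close> is a simple graph of maximum degree 2.
  For such a graph the handshake lemma gives \<open>2|V| = 2|E| + n\<^sub>1\<close>, where the number \<open>n\<^sub>1\<close> of
  degree-1 vertices equals \<open>u + d\<close>, \<open>d\<close> counting edges with both endpoints of degree 1.
  Every component carries at least one edge, and a component with a single edge is such an
  edge counted by \<open>d\<close>; hence \<open>2c \<le> |E| + d\<close>, and \<open>2\<gamma> = 2|V| - 2c \<ge> w + u\<close>.
\<close>

definition edge_verts :: "('a \<times> 'a) set \<Rightarrow> 'a set" where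
  "edge_verts E = (\<Union>p\<in>E. {fst p, snd p})"

definition edge_deg :: "('a \<times> 'a) set \<Rightarrow> 'a \<Rightarrow> nat" where
  "edge_deg E v = card {p\<in>E. v = fst p \<or> v = snd p}"

definition edge_comp_rel :: "('a \<times> 'a) set \<Rightarrow> 'a rel" where
  "edge_comp_rel E = (E \<union> E\<inverse>)\<^sup>* \<inter> edge_verts E \<times> edge_verts E"

lemma finite_edge_verts: "finite E \<Longrightarrow> finite (edge_verts E)"
  unfolding edge_verts_def by auto

lemma card_filter_eq_sum: "finite A \<Longrightarrow> card {x\<in>A. P x} = (\<Sum>x\<in>A. if P x then 1 else 0)"
  by (simp add: sum.inter_filter[symmetric])

lemma edge_deg_pos:
  assumes "finite E" and "v \<in> edge_verts E"
  shows "edge_deg E v \<ge> 1"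
proof -
  have "{p\<in>E. v = fst p \<or> v = snd p} \<noteq> {}"
    using assms(2) unfolding edge_verts_def by blast
  then show ?thesis unfolding edge_deg_def using assms(1) by (simp add: Suc_le_eq card_gt_0_iff)
qed

lemma sum_edge_verts_weighted_deg:
  fixes g :: "'a \<Rightarrow> nat"
  assumes fin: "finite E" and loopless: "\<forall>p\<in>E. fst p \<noteq> snd p"
  shows "(\<Sum>v\<in>edge_verts E. g v * edge_deg E v) = (\<Sum>p\<in>E. g (fst p) + g (snd p))"
proof -
  let ?V = "edge_verts E"
  have "(\<Sum>v\<in>?V. g v * edge_deg E v) = (\<Sum>v\<in>?V. \<Sum>p\<in>E. if v = fst p \<or> v = snd p then g v else 0)"
    by (simp add: edge_deg_def card_filter_eq_sum[OF fin] sum_distrib_left if_distrib cong: if_cong)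
  also have "\<dots> = (\<Sum>p\<in>E. \<Sum>v\<in>?V. if v = fst p \<or> v = snd p then g v else 0)"
    by (rule sum.swap)
  also have "\<dots> = (\<Sum>p\<in>E. g (fst p) + g (snd p))"
  proof (rule sum.cong[OF refl])
    fix p assume p: "p \<in> E"
    have "{v\<in>?V. v = fst p \<or> v = snd p} = {fst p, snd p}"
      using p unfolding edge_verts_def by auto
    then show "(\<Sum>v\<in>?V. if v = fst p \<or> v = snd p then g v else 0) = g (fst p) + g (snd p)"
      using p loopless finite_edge_verts[OF fin] by (simp add: sum.inter_filter[symmetric])
  qed
  finally show ?thesis .
qed

lemma card_leaves_eq:
  assumes fin: "finite E" and loopless: "\<forall>p\<in>E. fst p \<noteq> snd p"
  shows "card {v\<in>edge_verts E. edge_deg E v = 1}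
       = card {p\<in>E. edge_deg E (fst p) = 1 \<or> edge_deg E (snd p) = 1}
         + card {p\<in>E. edge_deg E (fst p) = 1 \<and> edge_deg E (snd p) = 1}"
proof -
  let ?leaf = "\<lambda>v. if edge_deg E v = 1 then 1 else 0 :: nat"
  have "card {v\<in>edge_verts E. edge_deg E v = 1} = (\<Sum>v\<in>edge_verts E. ?leaf v * edge_deg E v)"
    by (auto simp: card_filter_eq_sum finite_edge_verts[OF fin] intro!: sum.cong)
  also have "\<dots> = (\<Sum>p\<in>E. ?leaf (fst p) + ?leaf (snd p))"
    by (rule sum_edge_verts_weighted_deg[OF fin loopless])
  also have "\<dots> = card {p\<in>E. edge_deg E (fst p) = 1 \<or> edge_deg E (snd p) = 1}
                + card {p\<in>E. edge_deg E (fst p) = 1 \<and> edge_deg E (snd p) = 1}"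
    unfolding card_filter_eq_sum[OF fin] sum.distrib[symmetric] by (rule sum.cong) auto
  finally show ?thesis .
qed

lemma card_edge_verts_deg_le_2:
  assumes fin: "finite E" and loopless: "\<forall>p\<in>E. fst p \<noteq> snd p"
    and deg_le_2: "\<And>v. edge_deg E v \<le> 2"
  shows "2 * card (edge_verts E) = 2 * card E + card {v\<in>edge_verts E. edge_deg E v = 1}"
proof -
  let ?V = "edge_verts E"
  have "2 = edge_deg E v + (if edge_deg E v = 1 then 1 else 0)" if "v \<in> ?V" for v
    using edge_deg_pos[OF fin that] deg_le_2[of v] by auto
  then have "2 * card ?V = (\<Sum>v\<in>?V. edge_deg E v + (if edge_deg E v = 1 then 1 else 0))"
    by (simp add: sum.cong[of ?V ?V "\<lambda>_. 2"])
  also have "\<dots> = 2 * card E + card {v\<in>?V. edge_deg E v = 1}"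
    using sum_edge_verts_weighted_deg[OF fin loopless, of "\<lambda>_. 1"]
    by (simp add: sum.distrib card_filter_eq_sum finite_edge_verts[OF fin])
  finally show ?thesis .
qed

lemma equiv_edge_comp_rel: "equiv (edge_verts E) (edge_comp_rel E)"
proof -
  have "sym ((E \<union> E\<inverse>)\<^sup>*)" by (simp add: sym_Un_converse sym_rtrancl)
  then show ?thesis
    unfolding edge_comp_rel_def equiv_def refl_on_def sym_def trans_def
    by (auto intro: rtrancl_trans)
qed

lemma edge_comp_rel_endpoints:
  assumes "p \<in> E" "a \<in> {fst p, snd p}" "b \<in> {fst p, snd p}"
  shows "(a, b) \<in> edge_comp_rel E"
proof -
  have "(fst p, snd p) \<in> (E \<union> E\<inverse>)\<^sup>*" "(snd p, fst p) \<in> (E \<union> E\<inverse>)\<^sup>*"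
    using assms(1) by (auto intro: r_into_rtrancl)
  moreover have "a \<in> edge_verts E" "b \<in> edge_verts E"
    using assms unfolding edge_verts_def by auto
  ultimately show ?thesis using assms unfolding edge_comp_rel_def by auto
qed

lemma edge_comp_rel_shared_vertex:
  assumes "p \<in> E" "q \<in> E" "x \<in> {fst p, snd p}" "x \<in> {fst q, snd q}"
  shows "edge_comp_rel E `` {fst p} = edge_comp_rel E `` {fst q}"
proof -
  have "(fst p, x) \<in> edge_comp_rel E" "(x, fst q) \<in> edge_comp_rel E"
    using edge_comp_rel_endpoints[OF assms(1), of "fst p" x]
      edge_comp_rel_endpoints[OF assms(2), of x "fst q"] assms(3,4) by auto
  then have "(fst p, fst q) \<in> edge_comp_rel E"
    using equiv_edge_comp_rel[of E] unfolding equiv_def trans_def by blast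
  then show ?thesis by (simp add: equiv_class_eq[OF equiv_edge_comp_rel])
qed

lemma component_two_edges_or_isolated_edge:
  assumes fin: "finite E" and C: "C \<in> edge_verts E // edge_comp_rel E"
  defines "EC \<equiv> {p\<in>E. edge_comp_rel E `` {fst p} = C}"
  shows "card EC \<ge> 2 \<or> (\<exists>p. EC = {p} \<and> edge_deg E (fst p) = 1 \<and> edge_deg E (snd p) = 1)"
proof -
  from C obtain v where v: "v \<in> edge_verts E" "C = edge_comp_rel E `` {v}"
    by (auto elim: quotientE)
  then obtain p where p: "p \<in> E" "v \<in> {fst p, snd p}" unfolding edge_verts_def by auto
  have "(fst p, v) \<in> edge_comp_rel E"
    using edge_comp_rel_endpoints[OF p(1), of "fst p" v] p(2) by auto
  then have "p \<in> EC" unfolding EC_def v(2) using p(1)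
    by (simp add: equiv_class_eq[OF equiv_edge_comp_rel])
  show ?thesis
  proof (cases "EC = {p}")
    case True
    have "q = p" if "q \<in> E" "x \<in> {fst q, snd q}" "x \<in> {fst p, snd p}" for q x
    proof -
      have "q \<in> EC"
        using edge_comp_rel_shared_vertex[OF p(1) that(1) that(3,2)] \<open>p \<in> EC\<close> that(1)
        unfolding EC_def by simp
      then show ?thesis using True by simp
    qed
    then have "{q\<in>E. fst p = fst q \<or> fst p = snd q} = {p}" "{q\<in>E. snd p = fst q \<or> snd p = snd q} = {p}"
      using p(1) by auto
    then have "edge_deg E (fst p) = 1 \<and> edge_deg E (snd p) = 1"
      unfolding edge_deg_def by simp
    then show ?thesis using True by blast
  next
    case False
    then obtain q where "q \<in> EC" "q \<noteq> p" using \<open>p \<in> EC\<close> by blast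
    then have "card {p, q} \<le> card EC"
      using \<open>p \<in> EC\<close> fin by (intro card_mono) (auto simp: EC_def)
    then show ?thesis using \<open>q \<noteq> p\<close> by simp
  qed
qed

lemma two_card_components_le:
  assumes fin: "finite E"
  shows "2 * card (edge_verts E // edge_comp_rel E)
           \<le> card E + card {p\<in>E. edge_deg E (fst p) = 1 \<and> edge_deg E (snd p) = 1}"
proof -
  let ?Q = "edge_verts E // edge_comp_rel E"
  let ?comp = "\<lambda>p. edge_comp_rel E `` {fst p}"
  let ?w = "\<lambda>p. 1 + (if edge_deg E (fst p) = 1 \<and> edge_deg E (snd p) = 1 then 1 else 0) :: nat"
  have finQ: "finite ?Q"
    by (rule finite_quotient[OF finite_edge_verts[OF fin]]) (auto simp: edge_comp_rel_def)
  have compQ: "?comp ` E \<subseteq> ?Q"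
  proof
    fix C assume "C \<in> ?comp ` E"
    then obtain p where "p \<in> E" "C = ?comp p" by blast
    moreover have "fst p \<in> edge_verts E" using \<open>p \<in> E\<close> unfolding edge_verts_def by auto
    ultimately show "C \<in> ?Q" by (simp add: quotientI)
  qed
  have "2 \<le> sum ?w {p\<in>E. ?comp p = C}" if "C \<in> ?Q" for C
  proof -
    have card_le: "card {p\<in>E. ?comp p = C} \<le> sum ?w {p\<in>E. ?comp p = C}"
      unfolding card_eq_sum by (rule sum_mono) simp
    from component_two_edges_or_isolated_edge[OF fin that] show ?thesis
    proof
      assume "\<exists>p. {p\<in>E. ?comp p = C} = {p} \<and> edge_deg E (fst p) = 1 \<and> edge_deg E (snd p) = 1"
      then show ?thesis by auto
    qed (use card_le in linarith)
  qed
  then have "(\<Sum>C\<in>?Q. 2) \<le> (\<Sum>C\<in>?Q. sum ?w {p\<in>E. ?comp p = C})"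
    by (rule sum_mono)
  then have "2 * card ?Q \<le> (\<Sum>C\<in>?Q. sum ?w {p\<in>E. ?comp p = C})"
    by (simp add: mult.commute)
  also have "\<dots> = sum ?w E"
    by (rule sum.group[OF fin finQ compQ])
  also have "\<dots> = card E + card {p\<in>E. edge_deg E (fst p) = 1 \<and> edge_deg E (snd p) = 1}"
    unfolding sum.distrib card_filter_eq_sum[OF fin] by (simp only: card_eq_sum)
  finally show ?thesis .
qed

lemma card_fiber_le_1:
  assumes "inj_on g A"
  shows "card {x\<in>A. g x = v} \<le> 1"
proof -
  have "inj_on g {x\<in>A. g x = v}" using assms by (rule inj_on_subset) auto
  then have "card {x\<in>A. g x = v} = card (g ` {x\<in>A. g x = v})" by (rule card_image[symmetric])
  also have "\<dots> \<le> card {v}" by (rule card_mono) auto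
  finally show ?thesis by simp
qed

lemma edge_deg_le_2:
  assumes "inj_on fst E" and "inj_on snd E"
  shows "edge_deg E v \<le> 2"
proof -
  have "{p\<in>E. v = fst p \<or> v = snd p} = {p\<in>E. fst p = v} \<union> {p\<in>E. snd p = v}" by auto
  then have "edge_deg E v \<le> card {p\<in>E. fst p = v} + card {p\<in>E. snd p = v}"
    unfolding edge_deg_def by (simp add: card_Un_le)
  then show ?thesis using card_fiber_le_1[OF assms(1), of v] card_fiber_le_1[OF assms(2), of v] by linarith
qed

lemma edges_plus_leaf_edges_le:
  assumes fin: "finite E" and loopless: "\<forall>p\<in>E. fst p \<noteq> snd p"
    and deg_le_2: "\<And>v. edge_deg E v \<le> 2"
  shows "card E + card {p\<in>E. edge_deg E (fst p) = 1 \<or> edge_deg E (snd p) = 1}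
           + 2 * card (edge_verts E // edge_comp_rel E) \<le> 2 * card (edge_verts E)"
  using card_edge_verts_deg_le_2[OF assms] card_leaves_eq[OF fin loopless]
    two_card_components_le[OF fin] by linarith

lemma finite_constr_idx: "finite W \<Longrightarrow> finite (constr_idx f W)"
  by (rule finite_subset[of _ "W \<times> UNIV"]) (auto simp: constr_idx_def)

lemma cends_loopless:
  assumes "x \<in> constr_idx f W"
  shows "fst (cends f x) \<noteq> snd (cends f x)"
proof -
  obtain u b where x: "x = (u, b)" by fastforce
  show ?thesis
  proof (cases b)
    case True
    then show ?thesis using assms x
      by (cases "f u"; cases "f (padd u e2)") (auto simp: constr_idx_def e2_def)
  next
    case False
    then show ?thesis using assms x
      by (cases "f u"; cases "f (padd u e1)") (auto simp: constr_idx_def e1_def)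
  qed
qed

lemma padd_right_cancel: "padd u d = padd u' d \<longleftrightarrow> u = u'"
  by (cases u; cases u'; cases d) auto

lemma inj_on_fst_cends:
  assumes "inj_on f W"
  shows "inj_on (fst \<circ> cends f) (constr_idx f W)"
proof (rule inj_onI)
  fix x y assume x: "x \<in> constr_idx f W" and y: "y \<in> constr_idx f W"
    and "(fst \<circ> cends f) x = (fst \<circ> cends f) y"
  then have eq: "fst (cends f x) = fst (cends f y)" by simp
  obtain u b u' b' where xy: "x = (u, b)" "y = (u', b')" by fastforce
  have "u \<in> W" "u' \<in> W" using x y xy by (auto simp: constr_idx_def)
  moreover have "b = b' \<and> f u = f u'"
    using eq xy by (cases b; cases b'; cases "f u"; cases "f u'") auto
  ultimately have "b = b' \<and> u = u'" using inj_onD[OF assms, of u u'] by blast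
  then show "x = y" using xy by simp
qed

lemma inj_on_snd_cends:
  assumes "inj_on f W"
  shows "inj_on (snd \<circ> cends f) (constr_idx f W)"
proof (rule inj_onI)
  fix x y assume x: "x \<in> constr_idx f W" and y: "y \<in> constr_idx f W"
    and "(snd \<circ> cends f) x = (snd \<circ> cends f) y"
  then have eq: "snd (cends f x) = snd (cends f y)" by simp
  obtain u b u' b' where xy: "x = (u, b)" "y = (u', b')" by fastforce
  let ?d = "if b then e2 else e1" and ?d' = "if b' then e2 else e1"
  have "padd u ?d \<in> W" "padd u' ?d' \<in> W" using x y xy by (auto simp: constr_idx_def)
  moreover have "b = b' \<and> f (padd u ?d) = f (padd u' ?d')"
    using eq xy by (cases b; cases b'; cases "f (padd u ?d)"; cases "f (padd u' ?d')") auto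
  ultimately have "b = b'" "padd u ?d = padd u' ?d'"
    using inj_onD[OF assms, of "padd u ?d" "padd u' ?d'"] by blast+
  then show "x = y" using xy by (simp add: padd_right_cancel)
qed

lemma cedges_eq_mset_set:
  "inj_on f W \<Longrightarrow> cedges f W = mset_set (cends f ` constr_idx f W)"
  unfolding cedges_def by (rule image_mset_mset_set[OF inj_on_imageI2[OF inj_on_fst_cends]])

lemma two_gamma_ge_wcount_plus_ucount:
  assumes "finite W" and "inj_on f W"
  shows "int (wcount f W) + int (ucount f W) \<le> 2 * gamma f W"
proof -
  define E where "E = cends f ` constr_idx f W"
  have fin: "finite E" using finite_constr_idx[OF assms(1)] by (simp add: E_def)
  have cedges: "cedges f W = mset_set E" unfolding E_def by (rule cedges_eq_mset_set[OF assms(2)])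
  then have set_cedges: "set_mset (cedges f W) = E" using fin by simp
  have loopless: "\<forall>p\<in>E. fst p \<noteq> snd p" unfolding E_def using cends_loopless by blast
  have deg_le_2: "edge_deg E v \<le> 2" for v
    unfolding E_def by (rule edge_deg_le_2 inj_on_imageI inj_on_fst_cends inj_on_snd_cends assms(2))+
  have cverts: "cverts f W = edge_verts E"
    unfolding cverts_def edge_verts_def set_cedges ..
  have ncomp: "ncomp f W = card (edge_verts E // edge_comp_rel E)"
    unfolding ncomp_def cconn_def edge_comp_rel_def cverts set_cedges Let_def ..
  have cdeg: "cdeg f W = edge_deg E"
    unfolding cdeg_def edge_deg_def cedges using fin by (simp add: fun_eq_iff)
  have "wcount f W = card E" unfolding wcount_def cedges by simp
  moreover have "ucount f W = card {p\<in>E. edge_deg E (fst p) = 1 \<or> edge_deg E (snd p) = 1}"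
    unfolding ucount_def cdeg cedges using fin by simp
  moreover note edges_plus_leaf_edges_le[OF fin loopless deg_le_2]
  ultimately show ?thesis unfolding gamma_def cverts ncomp by simp
qed

theorem proposition3p5:
  fixes k n :: nat and f :: "int \<times> int \<Rightarrow> int \<times> int" and W :: "(int \<times> int) set"
  assumes "k \<ge> 1"
    and "f ` box k \<subseteq> grid n"
    and "inj_on f (box k)"
    and "W \<subseteq> box k"
  shows "real_of_int (gamma f W) \<ge> real (ucount f W) + (real (wcount f W) - real (ucount f W)) / 2
       \<and> real (ucount f W) + (real (wcount f W) - real (ucount f W)) / 2
         = real (wcount f W) / 2 + real (ucount f W) / 2"
proof -
  have "finite W" using assms(4) by (rule finite_subset) (simp add: box_def)
  moreover have "inj_on f W" using assms(3,4) by (rule inj_on_subset)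
  ultimately have "int (wcount f W) + int (ucount f W) \<le> 2 * gamma f W"
    by (rule two_gamma_ge_wcount_plus_ucount)
  then have "real (wcount f W) + real (ucount f W) \<le> 2 * real_of_int (gamma f W)"
    by (simp flip: of_int_le_iff)
  then show ?thesis by argo
qed

end
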